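(* There is a constant $C>0$ such that for all $\alpha\in\mathbb R$, $\gamma\in[0,1)$, $\varepsilon>0$, and $N\sim N(0,1)$, $$\min\Big[(1-\gamma)e^{\frac{\alpha}{1-\gamma}}+2\gamma,\ (1+\gamma)e^{\frac{\alpha}{1+\gamma}}\Big]-\varepsilon^2\Big(C(1+\alpha^2)\max\{e^{\frac{\alpha}{1-\gamma}},e^{\frac{\alpha}{1+\gamma}}\}+6\gamma\Big)$$ $$\le\sqrt{2\pi}\,\varepsilon^{-2}\,E\Big[\exp(-\varepsilon^{-1}N)\big(N+\gamma|N|+\varepsilon\alpha\big)^+\Big]\le\max\Big[(1-\gamma)e^{\frac{\alpha}{1-\gamma}}+2\gamma,\ (1+\gamma)e^{\frac{\alpha}{1+\gamma}}\Big].$$ *)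

theory Defs
  imports "HOL-Probability.Probability"
begin

definition std_normal_expectation :: "(real \<Rightarrow> real) \<Rightarrow> real" where
  "std_normal_expectation g = (\<integral>x. std_normal_density x * g x \<partial>lborel)"

end

theory Submission
  imports Defs
begin

(* Substituting n = \<epsilon> t turns the normalised expectation into
   \<integral> exp(-\<epsilon>^2 t^2 / 2) exp(-t) (t + \<gamma>|t| + \<alpha>)^+ dt.
   Dropping the Gaussian factor gives the upper bound: without it the integral is computed
   exactly, because for \<alpha> \<ge> 0 (resp. \<alpha> < 0) the kinked integrand is a combination of ramps
   (t + a)^+, whose exp(-t)-moments are Erlang moments; the result is A (resp. B).
   For the lower bound, (t + \<gamma>|t| + \<alpha>)^+ \<ge> (1 + \<gamma>) (t + a)^+ with a = \<alpha> / (1 + \<gamma>), and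
   exp(-x) \<ge> 1 - x leaves B minus \<epsilon>^2 (1 + \<gamma>) exp(a) / 2 times the moment 6 - 4a + a^2,
   which is at most 8 (1 + \<alpha>^2).  So C = 8 works, even without the slack term 6\<gamma>. *)

lemma has_bochner_integral_exp_neg_pos_part_power:
  fixes a :: real
  assumes "0 < k"
  shows "has_bochner_integral lborel (\<lambda>t. exp (-t) * max 0 (t + a) ^ k) (exp a * fact k)"
proof -
  have "has_bochner_integral lborel (\<lambda>s. erlang_density 0 1 s * s ^ k) (fact k)"
    using nn_integral_erlang_ith_moment[of 1 0 k]
    by (intro has_bochner_integral_nn_integral) (auto simp: erlang_density_def)
  then have "has_bochner_integral lborel (\<lambda>s. exp a * (erlang_density 0 1 s * s ^ k)) (exp a * fact k)"
    by (rule has_bochner_integral_mult_right)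
  also have "(\<lambda>s. exp a * (erlang_density 0 1 s * s ^ k))
      = (\<lambda>s. exp (- (- a + 1 * s)) * max 0 (- a + 1 * s + a) ^ k)"
    using assms by (auto simp: erlang_density_def exp_diff exp_minus field_simps)
  finally show ?thesis
    using lborel_has_bochner_integral_real_affine_iff[of 1 "\<lambda>t. exp (-t) * max 0 (t + a) ^ k" _ "- a"]
    by simp
qed

corollary has_bochner_integral_exp_neg_pos_part:
  fixes a :: real
  shows "has_bochner_integral lborel (\<lambda>t. exp (-t) * max 0 (t + a)) (exp a)"
  using has_bochner_integral_exp_neg_pos_part_power[of 1 a] by simp

lemma has_bochner_integral_sq_exp_neg_pos_part:
  fixes a :: real
  shows "has_bochner_integral lborel (\<lambda>t. t\<^sup>2 * (exp (-t) * max 0 (t + a))) (exp a * (6 - 4 * a + a\<^sup>2))"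
proof -
  have "has_bochner_integral lborel
      (\<lambda>t. exp (-t) * max 0 (t + a) ^ 3 - 2 * a * (exp (-t) * max 0 (t + a) ^ 2) + a\<^sup>2 * (exp (-t) * max 0 (t + a) ^ 1))
      (exp a * fact 3 - 2 * a * (exp a * fact 2) + a\<^sup>2 * (exp a * fact 1))"
    by (intro has_bochner_integral_add has_bochner_integral_diff has_bochner_integral_mult_right
        has_bochner_integral_exp_neg_pos_part_power) simp_all
  moreover have "(\<lambda>t. t\<^sup>2 * (exp (-t) * max 0 (t + a)))
      = (\<lambda>t. exp (-t) * max 0 (t + a) ^ 3 - 2 * a * (exp (-t) * max 0 (t + a) ^ 2) + a\<^sup>2 * (exp (-t) * max 0 (t + a) ^ 1))"
  proof
    fix t :: real
    show "t\<^sup>2 * (exp (-t) * max 0 (t + a))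
        = exp (-t) * max 0 (t + a) ^ 3 - 2 * a * (exp (-t) * max 0 (t + a) ^ 2) + a\<^sup>2 * (exp (-t) * max 0 (t + a) ^ 1)"
      by (cases "0 \<le> t + a") (simp_all add: max_def power2_eq_square power3_eq_cube algebra_simps)
  qed
  moreover have "exp a * fact 3 - 2 * a * (exp a * fact 2) + a\<^sup>2 * (exp a * fact 1) = exp a * (6 - 4 * a + a\<^sup>2)"
    by (simp add: fact_numeral algebra_simps)
  ultimately show ?thesis
    by simp
qed

lemma pos_part_kink_eq_of_nonneg:
  fixes \<alpha> \<gamma> t :: real
  assumes "0 \<le> \<alpha>" "0 \<le> \<gamma>" "\<gamma> < 1"
  shows "max 0 (t + \<gamma> * \<bar>t\<bar> + \<alpha>) = (1 - \<gamma>) * max 0 (t + \<alpha> / (1 - \<gamma>)) + 2 * \<gamma> * max 0 t"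
proof -
  have "(1 - \<gamma>) * max 0 (t + \<alpha> / (1 - \<gamma>)) = max 0 ((1 - \<gamma>) * t + \<alpha>)"
    using assms by (simp add: max_mult_distrib_left distrib_left)
  then show ?thesis
    using assms mult_left_mono[of t 0 \<gamma>] mult_right_mono[of \<gamma> 1 t]
    by (cases "0 \<le> t") (auto simp: max_def algebra_simps)
qed

lemma pos_part_kink_eq_of_nonpos:
  fixes \<alpha> \<gamma> t :: real
  assumes "\<alpha> \<le> 0" "0 \<le> \<gamma>" "\<gamma> \<le> 1"
  shows "max 0 (t + \<gamma> * \<bar>t\<bar> + \<alpha>) = (1 + \<gamma>) * max 0 (t + \<alpha> / (1 + \<gamma>))"
proof -
  have "(1 + \<gamma>) * max 0 (t + \<alpha> / (1 + \<gamma>)) = max 0 ((1 + \<gamma>) * t + \<alpha>)"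
    using assms by (simp add: max_mult_distrib_left distrib_left)
  moreover have "max 0 (t + \<gamma> * \<bar>t\<bar> + \<alpha>) = max 0 ((1 + \<gamma>) * t + \<alpha>)"
  proof (cases "0 \<le> t")
    case False
    then have "(1 - \<gamma>) * t \<le> 0" "(1 + \<gamma>) * t \<le> 0"
      using assms by (simp_all add: mult_nonneg_nonpos)
    moreover have "t + \<gamma> * \<bar>t\<bar> + \<alpha> = (1 - \<gamma>) * t + \<alpha>"
      using False by (simp add: algebra_simps)
    ultimately show ?thesis
      using assms by (simp add: max_absorb1)
  qed (simp add: algebra_simps)
  ultimately show ?thesis by simp
qed

lemma pos_part_kink_ge:
  fixes \<alpha> \<gamma> t :: real
  assumes "0 \<le> \<gamma>"
  shows "(1 + \<gamma>) * max 0 (t + \<alpha> / (1 + \<gamma>)) \<le> max 0 (t + \<gamma> * \<bar>t\<bar> + \<alpha>)"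
proof -
  have "(1 + \<gamma>) * max 0 (t + \<alpha> / (1 + \<gamma>)) = max 0 ((1 + \<gamma>) * t + \<alpha>)"
    using assms by (simp add: max_mult_distrib_left distrib_left)
  also have "\<dots> \<le> max 0 (t + \<gamma> * \<bar>t\<bar> + \<alpha>)"
    using mult_left_mono[of t "\<bar>t\<bar>" \<gamma>] assms by (intro max.mono) (simp_all add: algebra_simps)
  finally show ?thesis .
qed

lemma has_bochner_integral_exp_neg_pos_kink:
  fixes \<alpha> \<gamma> :: real
  assumes "0 \<le> \<gamma>" "\<gamma> < 1"
  shows "has_bochner_integral lborel (\<lambda>t. exp (-t) * max 0 (t + \<gamma> * \<bar>t\<bar> + \<alpha>))
    (if 0 \<le> \<alpha> then (1 - \<gamma>) * exp (\<alpha> / (1 - \<gamma>)) + 2 * \<gamma> else (1 + \<gamma>) * exp (\<alpha> / (1 + \<gamma>)))"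
proof (cases "0 \<le> \<alpha>")
  case True
  have "has_bochner_integral lborel
      (\<lambda>t. (1 - \<gamma>) * (exp (-t) * max 0 (t + \<alpha> / (1 - \<gamma>))) + 2 * \<gamma> * (exp (-t) * max 0 (t + 0)))
      ((1 - \<gamma>) * exp (\<alpha> / (1 - \<gamma>)) + 2 * \<gamma> * exp 0)"
    by (intro has_bochner_integral_add has_bochner_integral_mult_right
        has_bochner_integral_exp_neg_pos_part)
  moreover have "(\<lambda>t. exp (-t) * max 0 (t + \<gamma> * \<bar>t\<bar> + \<alpha>))
      = (\<lambda>t. (1 - \<gamma>) * (exp (-t) * max 0 (t + \<alpha> / (1 - \<gamma>))) + 2 * \<gamma> * (exp (-t) * max 0 (t + 0)))"
    unfolding pos_part_kink_eq_of_nonneg[OF True assms] by (simp add: algebra_simps)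
  ultimately show ?thesis
    using True by simp
next
  case False
  have "has_bochner_integral lborel (\<lambda>t. (1 + \<gamma>) * (exp (-t) * max 0 (t + \<alpha> / (1 + \<gamma>))))
      ((1 + \<gamma>) * exp (\<alpha> / (1 + \<gamma>)))"
    by (intro has_bochner_integral_mult_right has_bochner_integral_exp_neg_pos_part)
  moreover have "(\<lambda>t. exp (-t) * max 0 (t + \<gamma> * \<bar>t\<bar> + \<alpha>))
      = (\<lambda>t. (1 + \<gamma>) * (exp (-t) * max 0 (t + \<alpha> / (1 + \<gamma>))))"
    using pos_part_kink_eq_of_nonpos[of \<alpha> \<gamma>] False assms by (simp add: algebra_simps)
  ultimately show ?thesis
    using False by simp
qed

lemma integral_gauss_weighted_kink_le:
  fixes \<alpha> \<gamma> \<epsilon> :: real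
  assumes "0 \<le> \<gamma>" "\<gamma> < 1"
  shows "(\<integral>t. exp (- (\<epsilon> * t)\<^sup>2 / 2) * (exp (-t) * max 0 (t + \<gamma> * \<bar>t\<bar> + \<alpha>)) \<partial>lborel)
    \<le> max ((1 - \<gamma>) * exp (\<alpha> / (1 - \<gamma>)) + 2 * \<gamma>) ((1 + \<gamma>) * exp (\<alpha> / (1 + \<gamma>)))"
proof -
  note kink = has_bochner_integral_exp_neg_pos_kink[OF assms, of \<alpha>]
  have "(\<integral>t. exp (- (\<epsilon> * t)\<^sup>2 / 2) * (exp (-t) * max 0 (t + \<gamma> * \<bar>t\<bar> + \<alpha>)) \<partial>lborel)
      \<le> (\<integral>t. exp (-t) * max 0 (t + \<gamma> * \<bar>t\<bar> + \<alpha>) \<partial>lborel)"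
    by (intro integral_mono' integrable.intros[OF kink]) (simp_all add: mult_left_le_one_le)
  also have "\<dots> \<le> max ((1 - \<gamma>) * exp (\<alpha> / (1 - \<gamma>)) + 2 * \<gamma>) ((1 + \<gamma>) * exp (\<alpha> / (1 + \<gamma>)))"
    unfolding has_bochner_integral_integral_eq[OF kink] by simp
  finally show ?thesis .
qed

lemma integral_gauss_weighted_kink_ge_moments:
  fixes \<alpha> \<gamma> \<epsilon> :: real
  assumes "0 \<le> \<gamma>" "\<gamma> < 1"
  shows "(1 + \<gamma>) * exp (\<alpha> / (1 + \<gamma>)) * (1 - \<epsilon>\<^sup>2 / 2 * (6 - 4 * (\<alpha> / (1 + \<gamma>)) + (\<alpha> / (1 + \<gamma>))\<^sup>2))
    \<le> (\<integral>t. exp (- (\<epsilon> * t)\<^sup>2 / 2) * (exp (-t) * max 0 (t + \<gamma> * \<bar>t\<bar> + \<alpha>)) \<partial>lborel)"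
proof -
  define a where "a = \<alpha> / (1 + \<gamma>)"
  define g where "g t = exp (-t) * max 0 (t + a)" for t
  define h where "h t = exp (-t) * max 0 (t + \<gamma> * \<bar>t\<bar> + \<alpha>)" for t
  define w where "w t = exp (- (\<epsilon> * t)\<^sup>2 / 2)" for t :: real
  have lower: "has_bochner_integral lborel (\<lambda>t. (1 + \<gamma>) * g t - \<epsilon>\<^sup>2 / 2 * (1 + \<gamma>) * (t\<^sup>2 * g t))
      ((1 + \<gamma>) * exp a - \<epsilon>\<^sup>2 / 2 * (1 + \<gamma>) * (exp a * (6 - 4 * a + a\<^sup>2)))"
    unfolding g_def
    by (intro has_bochner_integral_diff has_bochner_integral_mult_right
        has_bochner_integral_exp_neg_pos_part has_bochner_integral_sq_exp_neg_pos_part)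
  have "integrable lborel h"
    using has_bochner_integral_exp_neg_pos_kink[OF assms, of \<alpha>] unfolding h_def by (rule integrable.intros)
  then have weighted: "integrable lborel (\<lambda>t. w t * h t)"
  proof (rule Bochner_Integration.integrable_bound)
    show "(\<lambda>t. w t * h t) \<in> borel_measurable lborel"
      unfolding w_def h_def by measurable
    show "AE t in lborel. norm (w t * h t) \<le> norm (h t)"
      by (intro AE_I2) (simp add: w_def h_def abs_mult mult_left_le_one_le)
  qed
  have pointwise: "(1 + \<gamma>) * g t - \<epsilon>\<^sup>2 / 2 * (1 + \<gamma>) * (t\<^sup>2 * g t) \<le> w t * h t" for t
  proof -
    have "1 - \<epsilon>\<^sup>2 / 2 * t\<^sup>2 \<le> w t"
      using exp_ge_add_one_self[of "- (\<epsilon> * t)\<^sup>2 / 2"] by (simp add: w_def power_mult_distrib)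
    moreover have "0 \<le> (1 + \<gamma>) * g t"
      using assms by (simp add: g_def)
    ultimately have "(1 - \<epsilon>\<^sup>2 / 2 * t\<^sup>2) * ((1 + \<gamma>) * g t) \<le> w t * ((1 + \<gamma>) * g t)"
      by (rule mult_right_mono)
    also have "\<dots> \<le> w t * h t"
      using pos_part_kink_ge[OF assms(1), of t \<alpha>]
      by (intro mult_left_mono) (simp_all add: w_def g_def h_def a_def mult.left_commute)
    finally show ?thesis
      by (simp add: algebra_simps)
  qed
  have "(\<integral>t. (1 + \<gamma>) * g t - \<epsilon>\<^sup>2 / 2 * (1 + \<gamma>) * (t\<^sup>2 * g t) \<partial>lborel) \<le> (\<integral>t. w t * h t \<partial>lborel)"
    by (intro integral_mono integrable.intros[OF lower] weighted pointwise)
  moreover have "(1 + \<gamma>) * exp a * (1 - \<epsilon>\<^sup>2 / 2 * (6 - 4 * a + a\<^sup>2))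
      = (1 + \<gamma>) * exp a - \<epsilon>\<^sup>2 / 2 * (1 + \<gamma>) * (exp a * (6 - 4 * a + a\<^sup>2))"
    by (simp add: field_simps)
  ultimately show ?thesis
    using has_bochner_integral_integral_eq[OF lower] by (simp add: a_def w_def h_def)
qed

lemma quadratic_le_of_abs_le:
  fixes a \<alpha> :: real
  assumes "\<bar>a\<bar> \<le> \<bar>\<alpha>\<bar>"
  shows "6 - 4 * a + a\<^sup>2 \<le> 8 * (1 + \<alpha>\<^sup>2)"
proof -
  have "a\<^sup>2 \<le> \<alpha>\<^sup>2"
    using assms by (simp add: abs_le_square_iff)
  moreover have "(a + 1)\<^sup>2 = a\<^sup>2 + 2 * a + 1"
    by (simp add: power2_sum)
  moreover note zero_le_power2[of "a + 1"] zero_le_power2[of \<alpha>]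
  ultimately show ?thesis
    by (simp only: distrib_left)
qed

lemma integral_gauss_weighted_kink_ge:
  fixes \<alpha> \<gamma> \<epsilon> :: real
  assumes "0 \<le> \<gamma>" "\<gamma> < 1"
  shows "(1 + \<gamma>) * exp (\<alpha> / (1 + \<gamma>)) - \<epsilon>\<^sup>2 * (8 * (1 + \<alpha>\<^sup>2) * exp (\<alpha> / (1 + \<gamma>)))
    \<le> (\<integral>t. exp (- (\<epsilon> * t)\<^sup>2 / 2) * (exp (-t) * max 0 (t + \<gamma> * \<bar>t\<bar> + \<alpha>)) \<partial>lborel)"
proof -
  define a where "a = \<alpha> / (1 + \<gamma>)"
  have "\<bar>a\<bar> \<le> \<bar>\<alpha>\<bar>"
    using assms by (simp add: a_def abs_div divide_le_eq mult_le_cancel_left1)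
  moreover have "0 \<le> 6 - 4 * a + a\<^sup>2"
    using zero_le_power2[of "a - 2"] by (simp add: power2_diff)
  ultimately have "(1 + \<gamma>) / 2 * (6 - 4 * a + a\<^sup>2) \<le> 1 * (8 * (1 + \<alpha>\<^sup>2))"
    using assms quadratic_le_of_abs_le by (intro mult_mono) simp_all
  then have "\<epsilon>\<^sup>2 * (exp a * ((1 + \<gamma>) / 2 * (6 - 4 * a + a\<^sup>2))) \<le> \<epsilon>\<^sup>2 * (exp a * (8 * (1 + \<alpha>\<^sup>2)))"
    by (intro mult_left_mono) simp_all
  moreover have "(1 + \<gamma>) * exp a * (1 - \<epsilon>\<^sup>2 / 2 * (6 - 4 * a + a\<^sup>2))
      = (1 + \<gamma>) * exp a - \<epsilon>\<^sup>2 * (exp a * ((1 + \<gamma>) / 2 * (6 - 4 * a + a\<^sup>2)))"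
    by (simp add: field_simps)
  ultimately have "(1 + \<gamma>) * exp a - \<epsilon>\<^sup>2 * (8 * (1 + \<alpha>\<^sup>2) * exp a)
      \<le> (1 + \<gamma>) * exp a * (1 - \<epsilon>\<^sup>2 / 2 * (6 - 4 * a + a\<^sup>2))"
    by (simp add: mult.commute)
  also have "\<dots> \<le> (\<integral>t. exp (- (\<epsilon> * t)\<^sup>2 / 2) * (exp (-t) * max 0 (t + \<gamma> * \<bar>t\<bar> + \<alpha>)) \<partial>lborel)"
    unfolding a_def by (rule integral_gauss_weighted_kink_ge_moments[OF assms])
  finally show ?thesis
    by (simp add: a_def)
qed

lemma integral_gauss_weighted_kink_bounds:
  fixes \<alpha> \<gamma> \<epsilon> :: real
  assumes \<gamma>: "0 \<le> \<gamma>" "\<gamma> < 1"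
  defines "A \<equiv> (1 - \<gamma>) * exp (\<alpha> / (1 - \<gamma>)) + 2 * \<gamma>"
    and "B \<equiv> (1 + \<gamma>) * exp (\<alpha> / (1 + \<gamma>))"
    and "I \<equiv> \<integral>t. exp (- (\<epsilon> * t)\<^sup>2 / 2) * (exp (-t) * max 0 (t + \<gamma> * \<bar>t\<bar> + \<alpha>)) \<partial>lborel"
  shows "min A B - \<epsilon>\<^sup>2 * (8 * (1 + \<alpha>\<^sup>2) * max (exp (\<alpha> / (1 - \<gamma>))) (exp (\<alpha> / (1 + \<gamma>))) + 6 * \<gamma>) \<le> I
    \<and> I \<le> max A B"
proof
  have "\<epsilon>\<^sup>2 * (8 * (1 + \<alpha>\<^sup>2) * exp (\<alpha> / (1 + \<gamma>)))
      \<le> \<epsilon>\<^sup>2 * (8 * (1 + \<alpha>\<^sup>2) * max (exp (\<alpha> / (1 - \<gamma>))) (exp (\<alpha> / (1 + \<gamma>))) + 6 * \<gamma>)"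
    using \<gamma> by (intro mult_left_mono add_increasing2) simp_all
  then show "min A B - \<epsilon>\<^sup>2 * (8 * (1 + \<alpha>\<^sup>2) * max (exp (\<alpha> / (1 - \<gamma>))) (exp (\<alpha> / (1 + \<gamma>))) + 6 * \<gamma>) \<le> I"
    using integral_gauss_weighted_kink_ge[OF \<gamma>, of \<alpha> \<epsilon>] unfolding A_def B_def I_def by linarith
  show "I \<le> max A B"
    using integral_gauss_weighted_kink_le[OF \<gamma>] unfolding A_def B_def I_def .
qed

lemma std_normal_expectation_rescale:
  fixes f :: "real \<Rightarrow> real" and \<epsilon> :: real
  assumes "0 < \<epsilon>"
  shows "std_normal_expectation (\<lambda>n. f (n / \<epsilon>))
    = \<epsilon> / sqrt (2 * pi) * (\<integral>t. exp (- (\<epsilon> * t)\<^sup>2 / 2) * f t \<partial>lborel)"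
proof -
  have "std_normal_expectation (\<lambda>n. f (n / \<epsilon>))
      = \<epsilon> * (\<integral>t. std_normal_density (\<epsilon> * t) * f t \<partial>lborel)"
    unfolding std_normal_expectation_def
    using lborel_integral_real_affine[of \<epsilon> "\<lambda>n. std_normal_density n * f (n / \<epsilon>)" 0] assms
    by simp
  also have "\<dots> = \<epsilon> * (\<integral>t. 1 / sqrt (2 * pi) * (exp (- (\<epsilon> * t)\<^sup>2 / 2) * f t) \<partial>lborel)"
    by (simp add: std_normal_density_def)
  finally show ?thesis by simp
qed

lemma std_normal_expectation_kink:
  fixes \<alpha> \<gamma> \<epsilon> :: real
  assumes "0 < \<epsilon>"
  shows "sqrt (2 * pi) * \<epsilon> powi (-2) *
      std_normal_expectation (\<lambda>n. exp (- n / \<epsilon>) * max 0 (n + \<gamma> * \<bar>n\<bar> + \<epsilon> * \<alpha>))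
    = (\<integral>t. exp (- (\<epsilon> * t)\<^sup>2 / 2) * (exp (-t) * max 0 (t + \<gamma> * \<bar>t\<bar> + \<alpha>)) \<partial>lborel)"
proof -
  have "max 0 (n + \<gamma> * \<bar>n\<bar> + \<epsilon> * \<alpha>) = \<epsilon> * max 0 (n / \<epsilon> + \<gamma> * \<bar>n / \<epsilon>\<bar> + \<alpha>)" for n
    using assms by (simp add: max_mult_distrib_left distrib_left abs_div)
  then have "std_normal_expectation (\<lambda>n. exp (- n / \<epsilon>) * max 0 (n + \<gamma> * \<bar>n\<bar> + \<epsilon> * \<alpha>))
      = std_normal_expectation (\<lambda>n. (\<lambda>t. \<epsilon> * (exp (-t) * max 0 (t + \<gamma> * \<bar>t\<bar> + \<alpha>))) (n / \<epsilon>))"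
    by (simp add: mult.left_commute)
  also have "\<dots> = \<epsilon>\<^sup>2 / sqrt (2 * pi)
      * (\<integral>t. exp (- (\<epsilon> * t)\<^sup>2 / 2) * (exp (-t) * max 0 (t + \<gamma> * \<bar>t\<bar> + \<alpha>)) \<partial>lborel)"
    using std_normal_expectation_rescale[OF assms,
        of "\<lambda>t. \<epsilon> * (exp (-t) * max 0 (t + \<gamma> * \<bar>t\<bar> + \<alpha>))"]
    by (simp add: mult.left_commute power2_eq_square)
  finally show ?thesis
    using assms by (simp add: power_int_minus)
qed

theorem lemma3p2:
  shows "\<exists>C::real. C > 0 \<and>
    (\<forall>(\<alpha>::real) (\<gamma>::real) (\<epsilon>::real). 0 \<le> \<gamma> \<longrightarrow> \<gamma> < 1 \<longrightarrow> \<epsilon> > 0 \<longrightarrow>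
      (let A = (1 - \<gamma>) * exp (\<alpha> / (1 - \<gamma>)) + 2 * \<gamma>;
           B = (1 + \<gamma>) * exp (\<alpha> / (1 + \<gamma>));
           M = sqrt (2 * pi) * \<epsilon> powi (-2) *
               std_normal_expectation
                 (\<lambda>n. exp (- n / \<epsilon>) * max 0 (n + \<gamma> * \<bar>n\<bar> + \<epsilon> * \<alpha>))
       in min A B - \<epsilon>\<^sup>2 * (C * (1 + \<alpha>\<^sup>2) * max (exp (\<alpha> / (1 - \<gamma>))) (exp (\<alpha> / (1 + \<gamma>)))
                              + 6 * \<gamma>) \<le> M
          \<and> M \<le> max A B))"
  unfolding Let_def
  by (intro exI[of _ 8] conjI allI impI)
    (simp_all only: std_normal_expectation_kink integral_gauss_weighted_kink_bounds zero_less_numeral)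

end
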